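(* Let $u$ be a stationary point with associated $g$, and suppose $\omega_c$ contains an interval $I$ of positive length. Then the function $x\mapsto\int_x^{x+1}g(s)\,ds$ is constant on the interior of $I$.
   Context: Fix $T>1$ and $a,b\in C^1(\mathbb{R})$, globally Lipschitz, with $a\ge a_0>0$. $U=\{1+v:v\in H^1_0(0,T)\}$, $(Bu)(x)=\int_x^{x+1}u$ for $x\in[0,T-1]$, $\omega_c=\{x\in[0,T-1]:(Bu)(x)=0\}$. A stationary point is a $u\in U\cap W^{2,\infty}(0,T)$ with $Bu\ge0$ on $[0,T-1]$ for which there is a nonnegative Radon measure $f$ on $[0,T-1]$ (extended by zero outside), with $\operatorname{supp}f\subset\omega_c$, such that $-2a(u)u''-a'(u)(u')^2+b'(u)=g$ a.e. on $(0,T)$, where $g(x)=\int_{x-1}^xf:=f([x-1,x])$. *)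

theory Defs
  imports "HOL-Analysis.Analysis"
begin

definition Bop :: "(real \<Rightarrow> real) \<Rightarrow> real \<Rightarrow> real" where
  "Bop u x = integral {x..x+1} u"

definition omega_c :: "real \<Rightarrow> (real \<Rightarrow> real) \<Rightarrow> real set" where
  "omega_c T u = {x \<in> {0..T-1}. Bop u x = 0}"

definition measure_support :: "real measure \<Rightarrow> real set" where
  "measure_support M = {x. \<forall>e>0. emeasure M (ball x e) > 0}"

definition g_of :: "real measure \<Rightarrow> real \<Rightarrow> real" where
  "g_of f x = measure f {x-1..x}"

text \<open>u in W^{2,infinity}(0,T), written via its (continuous) representative:
  u' = u1 absolutely continuous with bounded measurable derivative u2.\<close>
definition W2inf :: "real \<Rightarrow> (real \<Rightarrow> real) \<Rightarrow> (real \<Rightarrow> real) \<Rightarrow> (real \<Rightarrow> real) \<Rightarrow> bool" where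
  "W2inf T u u1 u2 \<longleftrightarrow>
     u2 \<in> borel_measurable lborel \<and> (\<exists>M. \<forall>x\<in>{0..T}. \<bar>u2 x\<bar> \<le> M) \<and>
     (\<forall>x\<in>{0..T}. u1 x = u1 0 + integral {0..x} u2) \<and>
     (\<forall>x\<in>{0..T}. u x = u 0 + integral {0..x} u1)"

definition stationary_point ::
  "real \<Rightarrow> (real \<Rightarrow> real) \<Rightarrow> (real \<Rightarrow> real) \<Rightarrow> (real \<Rightarrow> real) \<Rightarrow> (real \<Rightarrow> real)
   \<Rightarrow> real measure \<Rightarrow> bool" where
  "stationary_point T a a' b' u f \<longleftrightarrow>
     u 0 = 1 \<and> u T = 1 \<and>
     (\<forall>x\<in>{0..T-1}. Bop u x \<ge> 0) \<and>
     sets f = sets borel \<and> finite_measure f \<and>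
     emeasure f (- {0..T-1}) = 0 \<and>
     measure_support f \<subseteq> omega_c T u \<and>
     (\<exists>u1 u2. W2inf T u u1 u2 \<and>
        (AE x in lborel. x \<in> {0<..<T} \<longrightarrow>
           - 2 * a (u x) * u2 x - a' (u x) * (u1 x)^2 + b' (u x) = g_of f x))"

end

theory Submission
  imports Defs "HOL-Probability.Distribution_Functions"
begin

(* On an interval [x, y] of the contact set Bu vanishes; since (Bu)(t) is the integral of u
   over [t, t+1], this forces u(t+1) = u(t) on [x, y].  Integrating u' and u'' over [t, t+1]
   in the same way shows that u' and, almost everywhere, u'' are invariant under the shift
   by 1 there as well.  Hence so is the left-hand side of the Euler-Lagrange equation, i.e.
   g(t+1) = g(t) for almost every t in [x, y], and therefore
   int_y^(y+1) g - int_x^(x+1) g = int_x^y (g(t+1) - g(t)) dt = 0.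
   The almost-everywhere step uses that a function whose integrals over all [x, m] vanish is
   zero a.e.: the densities of its positive and negative parts define finite Borel measures
   with the same distribution function, which must therefore coincide. *)

lemma AE_lborel_translate:
  fixes c :: real
  assumes "AE x in lborel. P x"
  shows "AE x in lborel. P (x + c)"
proof -
  obtain N where N: "{x \<in> space lborel. \<not> P x} \<subseteq> N"
    and "emeasure lborel N = 0" "N \<in> sets lborel"
    using assms by (rule AE_E)
  then have "(+) c -` N \<in> null_sets lborel"
    using emeasure_distr[of "(+) c" lborel borel N] measurable_sets[of "(+) c" borel borel N]
    by (simp add: lborel_distr_plus null_sets_def)
  then show ?thesis
    by (rule AE_I') (use N(1) in \<open>auto simp: add.commute\<close>)
qed

lemma absolutely_integrable_on_bounded_measurable:
  fixes v :: "real \<Rightarrow> real"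
  assumes "v \<in> borel_measurable borel" "\<And>x. x \<in> {a..b} \<Longrightarrow> \<bar>v x\<bar> \<le> M"
  shows "v absolutely_integrable_on {a..b}"
proof (rule measurable_bounded_by_integrable_imp_absolutely_integrable[where g = "\<lambda>_. M"])
  show "v \<in> borel_measurable (lebesgue_on {a..b})"
    using assms(1) by (simp add: measurable_completion measurable_restrict_space1)
qed (use assms in auto)

lemma emeasure_density_indicator_atMost:
  fixes P :: "real \<Rightarrow> real"
  assumes "P \<in> borel_measurable borel" "\<And>s. 0 \<le> P s" "P integrable_on {x..y}"
  shows "emeasure (density lborel (\<lambda>s. ennreal (P s) * indicator {x..y} s)) {..m}
    = ennreal (integral {x..min y m} P)"
proof -
  have "emeasure (density lborel (\<lambda>s. ennreal (P s) * indicator {x..y} s)) {..m}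
      = (\<integral>\<^sup>+ s. ennreal (P s) * indicator {x..min y m} s \<partial>lborel)"
    using assms(1)
    by (subst emeasure_density) (auto intro!: nn_integral_cong simp: indicator_def)
  also have "\<dots> = ennreal (integral {x..min y m} P)"
    using assms(2) integrable_on_subinterval[OF assms(3), of x "min y m"]
    by (intro nn_integral_has_integral_lebesgue') auto
  finally show ?thesis .
qed

lemma finite_borel_measure_density_indicator:
  fixes P :: "real \<Rightarrow> real"
  assumes "P \<in> borel_measurable borel" "\<And>s. 0 \<le> P s" "P integrable_on {x..y}"
  shows "finite_borel_measure (density lborel (\<lambda>s. ennreal (P s) * indicator {x..y} s))"
proof -
  have "emeasure (density lborel (\<lambda>s. ennreal (P s) * indicator {x..y} s)) UNIV
      = ennreal (integral {x..y} P)"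
    using assms by (subst emeasure_density) (auto intro!: nn_integral_has_integral_lebesgue')
  then show ?thesis
    unfolding finite_borel_measure_def finite_borel_measure_axioms_def
    using assms(1) by (auto intro!: finite_measureI)
qed

lemma AE_eq_if_indefinite_integrals_eq:
  fixes P Q :: "real \<Rightarrow> real"
  assumes meas: "P \<in> borel_measurable borel" "Q \<in> borel_measurable borel"
    and nonneg: "\<And>s. 0 \<le> P s" "\<And>s. 0 \<le> Q s"
    and int: "P integrable_on {x..y}" "Q integrable_on {x..y}"
    and eq: "\<And>m. m \<in> {x..y} \<Longrightarrow> integral {x..m} P = integral {x..m} Q"
  shows "AE s in lborel. s \<in> {x..y} \<longrightarrow> P s = Q s"
proof -
  define \<mu> where "\<mu> R = density lborel (\<lambda>s. ennreal (R s) * indicator {x..y} s)"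
    for R :: "real \<Rightarrow> real"
  have cdf: "cdf (\<mu> R) m = integral {x..min y m} R"
    if "R \<in> borel_measurable borel" "\<And>s. 0 \<le> R s" "R integrable_on {x..y}" for R m
  proof -
    have "0 \<le> integral {x..min y m} R"
      using that(2) integrable_on_subinterval[OF that(3), of x "min y m"]
      by (intro integral_nonneg) auto
    then show ?thesis
      using emeasure_density_indicator_atMost[OF that, of m]
      unfolding cdf_def measure_def \<mu>_def by simp
  qed
  have "cdf (\<mu> P) = cdf (\<mu> Q)"
  proof
    fix m
    show "cdf (\<mu> P) m = cdf (\<mu> Q) m"
      using eq[of "min y m"] by (cases "x \<le> min y m") (auto simp: cdf meas nonneg int)
  qed
  then have "\<mu> P = \<mu> Q"
    by (intro cdf_unique')
      (auto simp: \<mu>_def intro!: finite_borel_measure_density_indicator meas nonneg int)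
  then have "AE s in lborel.
      ennreal (P s) * indicator {x..y} s = ennreal (Q s) * indicator {x..y} s"
    unfolding \<mu>_def using meas
    by (subst (asm) sigma_finite_measure.density_unique_iff[OF sigma_finite_lborel]) auto
  then show ?thesis
    by (rule eventually_mono) (use nonneg in \<open>auto simp: indicator_def\<close>)
qed

lemma integral_initial_segments_zero_imp_AE_zero:
  fixes \<psi> :: "real \<Rightarrow> real"
  assumes meas: "\<psi> \<in> borel_measurable borel"
    and ai: "\<psi> absolutely_integrable_on {x..y}"
    and zero: "\<And>m. m \<in> {x..y} \<Longrightarrow> integral {x..m} \<psi> = 0"
  shows "AE s in lborel. s \<in> {x..y} \<longrightarrow> \<psi> s = 0"
proof -
  define P where "P s = (\<bar>\<psi> s\<bar> + \<psi> s) / 2" for s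
  define Q where "Q s = (\<bar>\<psi> s\<bar> - \<psi> s) / 2" for s
  have int: "\<psi> integrable_on {x..y}" "(\<lambda>s. \<bar>\<psi> s\<bar>) integrable_on {x..y}"
    using ai by (auto simp: absolutely_integrable_on_def)
  then have "P integrable_on {x..y}" "Q integrable_on {x..y}"
    unfolding P_def Q_def by (auto intro!: integrable_on_divide integrable_add integrable_diff)
  moreover have "integral {x..m} P = integral {x..m} Q" if "m \<in> {x..y}" for m
  proof -
    have "integral {x..m} P - integral {x..m} Q = integral {x..m} \<psi>"
      using calculation integrable_on_subinterval[of _ "{x..y}" x m] that
      by (subst integral_diff[symmetric]) (auto simp: P_def Q_def field_simps)
    then show ?thesis using zero[OF that] by simp
  qed
  moreover have "P \<in> borel_measurable borel" "Q \<in> borel_measurable borel"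
    "\<And>s. 0 \<le> P s" "\<And>s. 0 \<le> Q s"
    using meas unfolding P_def[abs_def] Q_def[abs_def] by auto
  ultimately have "AE s in lborel. s \<in> {x..y} \<longrightarrow> P s = Q s"
    by (intro AE_eq_if_indefinite_integrals_eq)
  then show ?thesis
    by (rule eventually_mono) (auto simp: P_def Q_def)
qed

lemma integral_initial_segments_zero_imp_zero:
  fixes \<psi> :: "real \<Rightarrow> real"
  assumes cont: "continuous_on {x..y} \<psi>" and "x < y"
    and zero: "\<And>m. m \<in> {x..y} \<Longrightarrow> integral {x..m} \<psi> = 0"
    and r: "r \<in> {x..y}"
  shows "\<psi> r = 0"
proof -
  have "((\<lambda>m. integral {x..m} \<psi>) has_vector_derivative \<psi> r) (at r within {x..y})"
    using integral_has_vector_derivative[OF cont r] .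
  then have "((\<lambda>m. 0) has_vector_derivative \<psi> r) (at r within {x..y})"
    by (rule has_vector_derivative_transform[OF r, rotated]) (use zero in auto)
  then show ?thesis
    using vector_derivative_unique_within_closed_interval[of x y r "\<lambda>m. 0" "\<psi> r" 0]
      \<open>x < y\<close> r
    by auto
qed

lemma integral_shift_one_diff:
  fixes v :: "real \<Rightarrow> real"
  assumes "v integrable_on {t..s+1}" "t \<le> s"
  shows "integral {t..s} (\<lambda>r. v (r + 1) - v r) = integral {s..s+1} v - integral {t..t+1} v"
proof -
  have shifted: "(\<lambda>r. v (r + 1)) integrable_on {t..s}"
    using integrable_shift_real_ivl[OF integrable_on_subinterval[OF assms(1)], of "t+1" "s+1" 1]
    by simp
  have "integral {t..s} (\<lambda>r. v (r + 1)) = integral {t+1..s+1} v"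
    using integral_shift_real_ivl[of "t+1" 1 "s+1" v] by simp
  moreover have "integral {t..s} v + integral {s..s+1} v = integral {t..s+1} v"
    "integral {t..t+1} v + integral {t+1..s+1} v = integral {t..s+1} v"
    using assms by (auto intro!: Henstock_Kurzweil_Integration.integral_combine)
  ultimately show ?thesis
    using assms integrable_on_subinterval[OF assms(1), of t s]
    by (subst integral_diff[OF shifted]) auto
qed

lemma shift_invariant_if_unit_integrals_zero:
  fixes v :: "real \<Rightarrow> real"
  assumes "continuous_on {x..y+1} v" "x < y"
    and zero: "\<And>s. s \<in> {x..y} \<Longrightarrow> integral {s..s+1} v = 0"
  shows "\<forall>r\<in>{x..y}. v (r + 1) = v r"
proof
  fix r assume r: "r \<in> {x..y}"
  have "(\<lambda>r. v (r + 1) - v r) r = 0"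
  proof (rule integral_initial_segments_zero_imp_zero[OF _ \<open>x < y\<close> _ r])
    have "continuous_on {x..y} (\<lambda>r. v (r + 1))"
      by (rule continuous_on_compose2[OF assms(1)]) (auto intro: continuous_on_add)
    moreover have "continuous_on {x..y} v"
      using assms(1) by (rule continuous_on_subset) auto
    ultimately show "continuous_on {x..y} (\<lambda>r. v (r + 1) - v r)"
      by (rule continuous_on_diff)
    show "integral {x..m} (\<lambda>r. v (r + 1) - v r) = 0" if "m \<in> {x..y}" for m
      using that zero[of m] zero[of x] assms(1,2)
      by (subst integral_shift_one_diff)
        (auto intro!: integrable_continuous_interval elim: continuous_on_subset)
  qed
  then show "v (r + 1) = v r" by simp
qed

lemma AE_shift_invariant_if_unit_integrals_zero:
  fixes v :: "real \<Rightarrow> real"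
  assumes meas: "v \<in> borel_measurable borel"
    and bound: "\<And>r. r \<in> {x..y+1} \<Longrightarrow> \<bar>v r\<bar> \<le> M"
    and "x \<le> y"
    and zero: "\<And>s. s \<in> {x..y} \<Longrightarrow> integral {s..s+1} v = 0"
  shows "AE r in lborel. r \<in> {x..y} \<longrightarrow> v (r + 1) = v r"
proof -
  have int: "v integrable_on {x..y+1}"
    using absolutely_integrable_on_bounded_measurable[OF meas bound]
    by (simp add: absolutely_integrable_on_def)
  have "AE r in lborel. r \<in> {x..y} \<longrightarrow> v (r + 1) - v r = 0"
  proof (rule integral_initial_segments_zero_imp_AE_zero)
    show "(\<lambda>r. v (r + 1) - v r) \<in> borel_measurable borel" using meas by simp
    have "\<bar>v (r + 1) - v r\<bar> \<le> 2 * M" if "r \<in> {x..y}" for r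
      using bound[of r] bound[of "r + 1"] that \<open>x \<le> y\<close> by auto
    then show "(\<lambda>r. v (r + 1) - v r) absolutely_integrable_on {x..y}"
      using meas by (intro absolutely_integrable_on_bounded_measurable) auto
    show "integral {x..m} (\<lambda>r. v (r + 1) - v r) = 0" if "m \<in> {x..y}" for m
      using that zero[of m] zero[of x] integrable_on_subinterval[OF int, of x "m+1"]
      by (subst integral_shift_one_diff) auto
  qed
  then show ?thesis by (rule eventually_mono) simp
qed

lemma integral_unit_window_eq_if_AE_shift_invariant:
  fixes g :: "real \<Rightarrow> real"
  assumes int: "g integrable_on {x..y+1}" and "x \<le> y"
    and AE: "AE r in lborel. r \<in> {x..y} \<longrightarrow> g (r + 1) = g r"
  shows "integral {x..x+1} g = integral {y..y+1} g"
proof -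
  have "AE r in lborel. r \<in> {x..y} \<longrightarrow> g (r + 1) - g r = 0"
    using AE by eventually_elim simp
  then have "((\<lambda>r. g (r + 1) - g r) has_integral 0) {x..y}"
    using has_integral_AE[where \<Omega> = "{x..y}" and f = "\<lambda>r. g (r + 1) - g r"
        and g = "\<lambda>r. 0"]
    by simp
  then have "integral {x..y} (\<lambda>r. g (r + 1) - g r) = 0"
    by (rule integral_unique)
  then show ?thesis
    using integral_shift_one_diff[OF int \<open>x \<le> y\<close>] by simp
qed

lemma integral_eq_diff_if_indefinite_integral:
  fixes v V :: "real \<Rightarrow> real"
  assumes int: "v integrable_on {0..T}"
    and V: "\<forall>x\<in>{0..T}. V x = V 0 + integral {0..x} v"
    and "0 \<le> t" "t \<le> s" "s \<le> T"
  shows "integral {t..s} v = V s - V t"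
proof -
  have "v integrable_on {0..s}"
    using \<open>s \<le> T\<close> by (intro integrable_on_subinterval[OF int]) auto
  then have "integral {0..t} v + integral {t..s} v = integral {0..s} v"
    using \<open>0 \<le> t\<close> \<open>t \<le> s\<close> by (intro Henstock_Kurzweil_Integration.integral_combine)
  moreover have "V s = V 0 + integral {0..s} v" "V t = V 0 + integral {0..t} v"
    using bspec[OF V, of s] bspec[OF V, of t] assms(3-5) by simp_all
  ultimately show ?thesis by simp
qed

lemma continuous_on_if_indefinite_integral:
  fixes v V :: "real \<Rightarrow> real"
  assumes int: "v integrable_on {0..T}"
    and V: "\<forall>x\<in>{0..T}. V x = V 0 + integral {0..x} v"
  shows "continuous_on {0..T} V"
proof -
  have "continuous_on {0..T} (\<lambda>x. V 0 + integral {0..x} v)"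
    by (intro continuous_intros indefinite_integral_continuous_1 int)
  then show ?thesis
  proof (rule continuous_on_eq)
    show "V 0 + integral {0..x} v = V x" if "x \<in> {0..T}" for x
      by (rule sym) (rule bspec[OF V that])
  qed
qed

lemma W2inf_shift_invariant:
  assumes W: "W2inf T u u1 u2" and "0 \<le> x" "x < y" "y + 1 \<le> T"
    and Bu_zero: "\<And>t. t \<in> {x..y} \<Longrightarrow> Bop u t = 0"
  shows "\<forall>r\<in>{x..y}. u (r + 1) = u r" "\<forall>r\<in>{x..y}. u1 (r + 1) = u1 r"
    and "AE r in lborel. r \<in> {x..y} \<longrightarrow> u2 (r + 1) = u2 r"
proof -
  obtain M where meas: "u2 \<in> borel_measurable lborel"
    and bound: "\<forall>r\<in>{0..T}. \<bar>u2 r\<bar> \<le> M"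
    and u1: "\<forall>r\<in>{0..T}. u1 r = u1 0 + integral {0..r} u2"
    and u: "\<forall>r\<in>{0..T}. u r = u 0 + integral {0..r} u1"
    using W unfolding W2inf_def by blast
  have window: "{x..y+1} \<subseteq> {0..T}" using assms(2-4) by auto
  have "u2 integrable_on {0..T}"
    using absolutely_integrable_on_bounded_measurable[of u2 0 T M] meas bound
    by (simp add: absolutely_integrable_on_def)
  note u1_diff = integral_eq_diff_if_indefinite_integral[OF this u1]
  have u1_cont: "continuous_on {0..T} u1"
    by (rule continuous_on_if_indefinite_integral[OF \<open>u2 integrable_on {0..T}\<close> u1])
  have u1_int: "u1 integrable_on {0..T}"
    by (rule integrable_continuous_interval[OF u1_cont])
  note u_diff = integral_eq_diff_if_indefinite_integral[OF u1_int u]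
  have u_cont: "continuous_on {0..T} u"
    by (rule continuous_on_if_indefinite_integral[OF u1_int u])
  show u_shift: "\<forall>r\<in>{x..y}. u (r + 1) = u r"
    by (rule shift_invariant_if_unit_integrals_zero)
      (use Bu_zero \<open>x < y\<close> continuous_on_subset[OF u_cont window] in \<open>auto simp: Bop_def\<close>)
  show u1_shift: "\<forall>r\<in>{x..y}. u1 (r + 1) = u1 r"
    by (rule shift_invariant_if_unit_integrals_zero)
      (use u_shift \<open>x < y\<close> continuous_on_subset[OF u1_cont window] window
        in \<open>auto simp: u_diff\<close>)
  show "AE r in lborel. r \<in> {x..y} \<longrightarrow> u2 (r + 1) = u2 r"
    by (rule AE_shift_invariant_if_unit_integrals_zero[where v = u2 and M = M])
      (use u1_shift \<open>x < y\<close> window bound meas in \<open>auto simp: u1_diff\<close>)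
qed

lemma g_of_integrable_on:
  assumes "finite_measure f" and sets_f: "sets f = sets borel"
  shows "g_of f integrable_on {a..b}"
proof -
  interpret finite_measure f by fact
  have g_eq: "g_of f s = measure f {..s} - measure f {..<s-1}" for s
  proof -
    have interval_eq: "{s-1..s} = {..s} - {..<s-1}" by auto
    have "{..<s-1} \<subseteq> {..s}" by auto
    then have "measure f ({..s} - {..<s-1}) = measure f {..s} - measure f {..<s-1}"
      using sets_f by (intro finite_measure_Diff) auto
    then show ?thesis unfolding g_of_def interval_eq .
  qed
  have "mono_on {a..b} (\<lambda>s. measure f {..s})"
  proof (rule mono_onI)
    fix r s :: real assume "r \<le> s"
    then show "measure f {..r} \<le> measure f {..s}"
      using sets_f by (intro finite_measure_mono) auto
  qed
  moreover have "mono_on {a..b} (\<lambda>s. measure f {..<s-1})"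
  proof (rule mono_onI)
    fix r s :: real assume "r \<le> s"
    then show "measure f {..<r-1} \<le> measure f {..<s-1}"
      using sets_f by (intro finite_measure_mono) auto
  qed
  ultimately have "(\<lambda>s. measure f {..s} - measure f {..<s-1}) integrable_on {a..b}"
    by (intro integrable_diff integrable_on_mono_on)
  then show ?thesis unfolding g_eq[abs_def] .
qed

lemma stationary_point_g_AE_shift_invariant:
  assumes sp: "stationary_point T a a' b' u f" and "0 < x" "x < y" "y < T - 1"
    and Bu_zero: "\<And>t. t \<in> {x..y} \<Longrightarrow> Bop u t = 0"
  shows "AE r in lborel. r \<in> {x..y} \<longrightarrow> g_of f (r + 1) = g_of f r"
proof -
  obtain u1 u2 where W: "W2inf T u u1 u2"
    and EL: "AE r in lborel. r \<in> {0<..<T} \<longrightarrow>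
      - 2 * a (u r) * u2 r - a' (u r) * (u1 r)^2 + b' (u r) = g_of f r"
    using sp unfolding stationary_point_def by blast
  have u_shift: "\<forall>r\<in>{x..y}. u (r + 1) = u r"
    and u1_shift: "\<forall>r\<in>{x..y}. u1 (r + 1) = u1 r"
    and u2_shift: "AE r in lborel. r \<in> {x..y} \<longrightarrow> u2 (r + 1) = u2 r"
    using W2inf_shift_invariant[OF W _ \<open>x < y\<close> _ Bu_zero] assms(2,4) by simp_all
  from EL AE_lborel_translate[OF EL, of 1] u2_shift show ?thesis
  proof eventually_elim
    case (elim r)
    show ?case
    proof
      assume r: "r \<in> {x..y}"
      then have "r \<in> {0<..<T}" "r + 1 \<in> {0<..<T}"
        using assms(2,4) by auto
      then show "g_of f (r + 1) = g_of f r"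
        using elim r u_shift u1_shift by simp
    qed
  qed
qed

lemma stationary_point_unit_window_integral_eq:
  assumes sp: "stationary_point T a a' b' u f" and "0 < x" "x < y" "y < T - 1"
    and contact: "{x..y} \<subseteq> omega_c T u"
  shows "integral {x..x+1} (g_of f) = integral {y..y+1} (g_of f)"
proof (rule integral_unit_window_eq_if_AE_shift_invariant)
  show "g_of f integrable_on {x..y+1}"
    using sp unfolding stationary_point_def by (auto intro: g_of_integrable_on)
  have "\<And>t. t \<in> {x..y} \<Longrightarrow> Bop u t = 0"
    using contact unfolding omega_c_def by auto
  then show "AE r in lborel. r \<in> {x..y} \<longrightarrow> g_of f (r + 1) = g_of f r"
    by (rule stationary_point_g_AE_shift_invariant[OF sp assms(2-4)])
qed (use \<open>x < y\<close> in simp)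

theorem mainTheorem8:
  fixes T a0 :: real and a a' b b' u :: "real \<Rightarrow> real" and f :: "real measure"
    and I :: "real set"
  assumes "T > 1"
    and "\<And>x. (a has_real_derivative a' x) (at x)" and "continuous_on UNIV a'"
    and "\<And>x. (b has_real_derivative b' x) (at x)" and "continuous_on UNIV b'"
    and "\<exists>L. L-lipschitz_on UNIV a" and "\<exists>L. L-lipschitz_on UNIV b"
    and "a0 > 0" and "\<And>x. a x \<ge> a0"
    and "stationary_point T a a' b' u f"
    and "is_interval I" and "\<exists>c\<in>I. \<exists>d\<in>I. c < d" and "I \<subseteq> omega_c T u"
  shows "\<exists>C. \<forall>x\<in>interior I. integral {x..x+1} (g_of f) = C"
proof -
  \<comment> \<open>Only the Euler-Lagrange equation enters; the hypotheses on a, b and the length of I do not.\<close>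
  have "I \<subseteq> {0..T-1}"
    using \<open>I \<subseteq> omega_c T u\<close> unfolding omega_c_def by auto
  then have I_inner: "interior I \<subseteq> {0<..<T-1}"
    using interior_mono[of I "{0..T-1}"] by simp
  have window_eq: "integral {x..x+1} (g_of f) = integral {y..y+1} (g_of f)"
    if "x \<in> interior I" "y \<in> interior I" "x < y" for x y
  proof (rule stationary_point_unit_window_integral_eq[OF \<open>stationary_point T a a' b' u f\<close>])
    have "{x..y} \<subseteq> I"
      using that interior_subset mem_is_interval_1_I[OF \<open>is_interval I\<close>]
      by (meson atLeastAtMost_iff subsetI subsetD)
    then show "{x..y} \<subseteq> omega_c T u"
      using \<open>I \<subseteq> omega_c T u\<close> by blast
  qed (use that I_inner in auto)
  show ?thesis
  proof (cases "interior I = {}")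
    case False
    then obtain x0 where "x0 \<in> interior I" by blast
    then have "integral {x..x+1} (g_of f) = integral {x0..x0+1} (g_of f)"
      if "x \<in> interior I" for x
      using window_eq[of x x0] window_eq[of x0 x] that
      by (cases x x0 rule: linorder_cases) auto
    then show ?thesis by blast
  qed simp
qed

end
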